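(* Consider the Parallel Symmetric Subspace Decomposition (P-SSD) algorithm described in the context, executed by $M$ agents over an arbitrary, possibly time-varying, sequence of communication digraphs $\{G_k=(\{1,\dots,M\},E_k)\}_{k\ge 1}$. Then the algorithm reaches an equilibrium after a finite number of iterations, i.e., there exists $k\in\mathbb{N}$ such that $C_p^i=C_k^i$ for all $p>k$ and all $i\in\{1,\dots,M\}$.
   Context: Data setting: a map $T:\mathcal{M}\to\mathcal{M}$, $\mathcal{M}\subseteq\mathbb{R}^n$; a dictionary $D(x)=[d_1(x),\dots,d_{N_d}(x)]$ of real-valued functions on $\mathcal{M}$; data matrices $X,Y\in\mathbb{R}^{N\times n}$ whose $i$-th rows $x_i^T,y_i^T$ satisfy $y_i=T(x_i)$; $D(X)\in\mathbb{R}^{N\times N_d}$ is the matrix with rows $D(x_1),\dots,D(x_N)$ (similarly $D(Y)$). Assumption: $D(X)$ and $D(Y)$ have full column rank. There are $M$ agents; agent $i$ holds local dictionary snapshots $D(X_i),D(Y_i)$ (obtained from a subset of the snapshot pairs) such that the union over $i$ of the rows of $[D(X_i),D(Y_i)]$ equals the set of rows of $[D(X),D(Y)]$. There are signature matrices $D(X_s),D(Y_s)$ with full column rank such that the rows of $[D(X_s),D(Y_s)]$ are contained in the rows of $[D(X_i),D(Y_i)]$ for every $i$. SSD algorithm: given $A,B\in\mathbb{R}^{m\times q}$, set $A_1=A$, $B_1=B$, $C=I_q$, and iterate: let $[Z^A_j;Z^B_j]$ be a matrix whose columns form a basis of the null space of $[A_j,B_j]$ (with $Z^A_j$ having as many rows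 as $A_j$ has columns); if the null space is trivial return $0$; if the number of rows of $Z^A_j$ is at most its number of columns, return $C$; otherwise set $C\leftarrow CZ^A_j$, $A_{j+1}=A_jZ^A_j$, $B_{j+1}=B_jZ^A_j$. Its output is denoted $\mathrm{SSD}(A,B)$. P-SSD algorithm: at iteration $k\ge1$ the digraph $G_k$ is used; an edge $(j,i)\in E_k$ means $j$ is an in-neighbor of $i$, and $\mathcal{N}_{\mathrm{in}}^k(i)$ denotes the in-neighbors of $i$ in $G_k$. Each agent $i$ sets $C_0^i=I_{N_d}$, $\mathrm{flag}_0^i=0$, and for $k=1,2,\dots$: receives $C_{k-1}^j$ for $j\in\mathcal{N}_{\mathrm{in}}^k(i)$; sets $D_k^i=\mathrm{basis}\big(\bigcap_{j\in\{i\}\cup\mathcal{N}_{\mathrm{in}}^k(i)}\mathcal{R}(C_{k-1}^j)\big)$; sets $E_k^i=\mathrm{SSD}(D(X_i)D_k^i,D(Y_i)D_k^i)$; if the number of columns of $D_k^iE_k^i$ is strictly less than that of $C_{k-1}^i$, sets $C_k^i=D_k^iE_k^i$ and $\mathrm{flag}_k^i=0$; otherwise sets $C_k^i=C_{k-1}^i$ and $\mathrm{flag}_k^i=1$; then transmits $C_k^i$ to its out-neighbors. Here $\mathrm{basis}(\mathcal{A})$ returns a matrix whose columns form a basis of the subspace $\mathcal{A}$, and returns $0$ if $\mathcal{A}=\{0\}$; the matrix $0$ is regarded as having $0$ columns. $\mathcal{R}(\cdot)$ denotes range space. *)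

theory Defs
  imports "Jordan_Normal_Form.Matrix"
begin

text \<open>Convention: the "zero matrix regarded as having 0 columns" is represented by a
  matrix with 0 columns (e.g. an n x 0 matrix), whose range is the zero subspace.\<close>

definition range_mat :: "real mat \<Rightarrow> real vec set" where
  "range_mat A = {mult_mat_vec A x | x. x \<in> carrier_vec (dim_col A)}"

definition full_col_rank :: "real mat \<Rightarrow> bool" where
  "full_col_rank A \<longleftrightarrow> (\<forall>x \<in> carrier_vec (dim_col A). mult_mat_vec A x = 0\<^sub>v (dim_row A) \<longrightarrow> x = 0\<^sub>v (dim_col A))"

definition is_col_basis :: "real mat \<Rightarrow> real vec set \<Rightarrow> bool" where
  "is_col_basis B S \<longleftrightarrow> full_col_rank B \<and> range_mat B = S"

definition hcat :: "real mat \<Rightarrow> real mat \<Rightarrow> real mat" where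
  "hcat A B = mat (dim_row A) (dim_col A + dim_col B)
     (\<lambda>(i,j). if j < dim_col A then A $$ (i,j) else B $$ (i, j - dim_col A))"

text \<open>Top q rows of a matrix (the block Z^A of Z = [Z^A; Z^B]).\<close>
definition top_rows :: "nat \<Rightarrow> real mat \<Rightarrow> real mat" where
  "top_rows q Z = mat q (dim_col Z) (\<lambda>(i,j). Z $$ (i,j))"

definition null_space :: "real mat \<Rightarrow> real vec set" where
  "null_space A = {v \<in> carrier_vec (dim_col A). mult_mat_vec A v = 0\<^sub>v (dim_row A)}"

definition rows_set :: "real mat \<Rightarrow> real vec set" where
  "rows_set A = {row A r | r. r < dim_row A}"

text \<open>Runs of the SSD loop: ssd_loop A B C R means that, starting the loop in state
  (A_j, B_j, C) = (A, B, C), the algorithm may return R (for some admissible choice of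
  null-space bases).\<close>
inductive ssd_loop :: "real mat \<Rightarrow> real mat \<Rightarrow> real mat \<Rightarrow> real mat \<Rightarrow> bool" where
  trivial: "null_space (hcat A B) = {0\<^sub>v (dim_col A + dim_col B)} \<Longrightarrow>
            ssd_loop A B C (0\<^sub>m (dim_row C) 0)"
| stop: "is_col_basis Z (null_space (hcat A B)) \<Longrightarrow>
         null_space (hcat A B) \<noteq> {0\<^sub>v (dim_col A + dim_col B)} \<Longrightarrow>
         dim_col A \<le> dim_col Z \<Longrightarrow>
         ssd_loop A B C C"
| step: "is_col_basis Z (null_space (hcat A B)) \<Longrightarrow>
         null_space (hcat A B) \<noteq> {0\<^sub>v (dim_col A + dim_col B)} \<Longrightarrow>
         \<not> dim_col A \<le> dim_col Z \<Longrightarrow>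
         ssd_loop (A * top_rows (dim_col A) Z) (B * top_rows (dim_col A) Z)
                  (C * top_rows (dim_col A) Z) R \<Longrightarrow>
         ssd_loop A B C R"

definition ssd_output :: "real mat \<Rightarrow> real mat \<Rightarrow> real mat \<Rightarrow> bool" where
  "ssd_output A B E \<longleftrightarrow> ssd_loop A B (1\<^sub>m (dim_col A)) E"

text \<open>Standing data assumptions of the setting.  DXg, DYg: global D(X), D(Y);
  DXl i, DYl i: local snapshots of agent i; DXs, DYs: signature matrices.\<close>
definition data_assumptions ::
  "nat \<Rightarrow> nat \<Rightarrow> real mat \<Rightarrow> real mat \<Rightarrow> (nat \<Rightarrow> real mat) \<Rightarrow> (nat \<Rightarrow> real mat)
   \<Rightarrow> real mat \<Rightarrow> real mat \<Rightarrow> bool" where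
  "data_assumptions M Nd DXg DYg DXl DYl DXs DYs \<longleftrightarrow>
     dim_col DXg = Nd \<and> dim_col DYg = Nd \<and> dim_row DXg = dim_row DYg \<and>
     full_col_rank DXg \<and> full_col_rank DYg \<and>
     (\<forall>i\<in>{1..M}. dim_col (DXl i) = Nd \<and> dim_col (DYl i) = Nd \<and>
                   dim_row (DXl i) = dim_row (DYl i)) \<and>
     (\<Union>i\<in>{1..M}. rows_set (hcat (DXl i) (DYl i))) = rows_set (hcat DXg DYg) \<and>
     dim_col DXs = Nd \<and> dim_col DYs = Nd \<and> dim_row DXs = dim_row DYs \<and>
     full_col_rank DXs \<and> full_col_rank DYs \<and>
     (\<forall>i\<in>{1..M}. rows_set (hcat DXs DYs) \<subseteq> rows_set (hcat (DXl i) (DYl i)))"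

text \<open>C is an execution of P-SSD by agents 1..M over the digraph sequence E
  (E k is the edge set of G_k, k \<ge> 1; (j,i) \<in> E k means j is an in-neighbor of i).  The flags do not influence C and are omitted.\<close>
definition pssd_execution ::
  "nat \<Rightarrow> nat \<Rightarrow> (nat \<Rightarrow> real mat) \<Rightarrow> (nat \<Rightarrow> real mat) \<Rightarrow> (nat \<Rightarrow> (nat \<times> nat) set)
   \<Rightarrow> (nat \<Rightarrow> nat \<Rightarrow> real mat) \<Rightarrow> bool" where
  "pssd_execution M Nd DXl DYl E C \<longleftrightarrow>
     (\<forall>i\<in>{1..M}. C 0 i = 1\<^sub>m Nd) \<and>
     (\<forall>k\<ge>1. \<forall>i\<in>{1..M}. \<exists>Dk Ek.
        dim_row Dk = Nd \<and>
        is_col_basis Dk (\<Inter>j\<in>{i} \<union> {j. (j,i) \<in> E k}. range_mat (C (k-1) j)) \<and>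
        ssd_output (DXl i * Dk) (DYl i * Dk) Ek \<and>
        (if dim_col (Dk * Ek) < dim_col (C (k-1) i)
         then C k i = Dk * Ek else C k i = C (k-1) i))"

end

theory Submission
  imports Defs
begin

text \<open>Each P-SSD update either keeps an agent's matrix or replaces it by one with strictly
  fewer columns.  A sequence whose changes all strictly decrease a natural-number measure is
  eventually constant (from a point of minimal measure nothing can change any more), and
  finitely many eventually constant sequences are simultaneously constant from some point on.\<close>

lemma eventually_constant_if_changes_decrease:
  fixes f :: "nat \<Rightarrow> 'a" and \<mu> :: "'a \<Rightarrow> nat"
  assumes change: "\<And>k. f (Suc k) = f k \<or> \<mu> (f (Suc k)) < \<mu> (f k)"
  shows "\<exists>c. \<forall>\<^sub>F k in sequentially. f k = c"
proof -
  obtain k0 where minimal: "\<And>k. \<mu> (f k0) \<le> \<mu> (f k)"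
    using ex_has_least_nat[of "\<lambda>_. True" 0 "\<lambda>k. \<mu> (f k)"] by blast
  have "f k = f k0" if "k0 \<le> k" for k
    using that
  proof (induction k rule: dec_induct)
    case base
    show ?case ..
  next
    case (step k)
    with change[of k] minimal[of "Suc k"] show ?case by auto
  qed
  then show ?thesis
    unfolding eventually_sequentially by blast
qed

lemma pssd_execution_change_drops_columns:
  assumes "pssd_execution M Nd DXl DYl E C" and "i \<in> {1..M}"
  shows "C (Suc k) i = C k i \<or> dim_col (C (Suc k) i) < dim_col (C k i)"
proof -
  obtain Dk Ek where
    "if dim_col (Dk * Ek) < dim_col (C k i) then C (Suc k) i = Dk * Ek else C (Suc k) i = C k i"
    using assms unfolding pssd_execution_def by (metis diff_Suc_1 le_add1 plus_1_eq_Suc)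
  then show ?thesis
    by (auto split: if_splits)
qed

theorem proposition4p2:
  fixes M Nd :: nat
    and DXg DYg DXs DYs :: "real mat"
    and DXl DYl :: "nat \<Rightarrow> real mat"
    and E :: "nat \<Rightarrow> (nat \<times> nat) set"
    and C :: "nat \<Rightarrow> nat \<Rightarrow> real mat"
  assumes "data_assumptions M Nd DXg DYg DXl DYl DXs DYs"
    and "\<forall>k\<ge>1. E k \<subseteq> {1..M} \<times> {1..M}"
    and "pssd_execution M Nd DXl DYl E C"
  shows "\<exists>k. \<forall>p>k. \<forall>i\<in>{1..M}. C p i = C k i"
proof -
  have "\<exists>c. \<forall>\<^sub>F k in sequentially. C k i = c" if "i \<in> {1..M}" for i
    by (rule eventually_constant_if_changes_decrease[where \<mu> = dim_col])
      (rule pssd_execution_change_drops_columns[OF assms(3) that])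
  then obtain c where "\<forall>i\<in>{1..M}. \<forall>\<^sub>F k in sequentially. C k i = c i"
    by metis
  then have "\<forall>\<^sub>F k in sequentially. \<forall>i\<in>{1..M}. C k i = c i"
    by (rule eventually_ball_finite[rotated]) simp
  then obtain k where k: "\<And>p i. k \<le> p \<Longrightarrow> i \<in> {1..M} \<Longrightarrow> C p i = c i"
    unfolding eventually_sequentially by blast
  have "C p i = C k i" if "k < p" and "i \<in> {1..M}" for p i
    using k[of p i] k[of k i] that by simp
  then show ?thesis
    by blast
qed

end
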